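(* Let $i\in\{1,2\}$ and let $X$ be a digital image. Then $X$ is $\mathrm{NP}_i$-irreducible if and only if no automorphism of $X$ is $\mathrm{NP}_i$-homotopic to a non-surjective map $X\to X$.
   Context: A digital image is a finite set $X\subset\mathbb{Z}^n$ with a reflexive symmetric adjacency relation (a finite reflexive graph); continuous maps send adjacent points to adjacent points; an automorphism is a continuous bijection $X\to X$ with continuous inverse. On products, $\mathrm{NP}_u$ declares two tuples adjacent iff coordinates are adjacent in at most $u$ positions and equal elsewhere. An $\mathrm{NP}_i$-homotopy from $f$ to $g:X\to Y$ is an $\mathrm{NP}_i$-continuous $H:X\times[0,m]_{\mathbb{Z}}\to Y$ (interval with $a\sim b\iff|a-b|\le1$) with $H(\cdot,0)=f$, $H(\cdot,m)=g$; write $f\simeq_i g$. $X,Y$ are $\mathrm{NP}_i$-homotopy equivalent if there are continuous $f:X\to Y$, $g:Y\to X$ with $g\circ f\simeq_i\mathrm{id}_X$, $f\circ g\simeq_i\mathrm{id}_Y$. $X$ is $\mathrm{NP}_i$-irreducible if it is not $\mathrm{NP}_i$-homotopy equivalent to a digital image with fewer points. *)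

theory Defs
  imports Main
begin

definition digital_image :: "int list set \<Rightarrow> (int list \<Rightarrow> int list \<Rightarrow> bool) \<Rightarrow> bool" where
  "digital_image X adj \<longleftrightarrow> finite X \<and> (\<exists>n. \<forall>x\<in>X. length x = n)
     \<and> (\<forall>x\<in>X. adj x x) \<and> (\<forall>x\<in>X. \<forall>y\<in>X. adj x y \<longrightarrow> adj y x)"

definition dcont :: "'a set \<Rightarrow> ('a \<Rightarrow> 'a \<Rightarrow> bool) \<Rightarrow> 'b set \<Rightarrow> ('b \<Rightarrow> 'b \<Rightarrow> bool) \<Rightarrow> ('a \<Rightarrow> 'b) \<Rightarrow> bool" where
  "dcont X A Y B f \<longleftrightarrow> f ` X \<subseteq> Y \<and> (\<forall>x\<in>X. \<forall>y\<in>X. A x y \<longrightarrow> B (f x) (f y))"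

definition int_adj :: "int \<Rightarrow> int \<Rightarrow> bool" where
  "int_adj a b \<longleftrightarrow> \<bar>a - b\<bar> \<le> 1"

definition np_adj :: "nat \<Rightarrow> ('a \<Rightarrow> 'a \<Rightarrow> bool) \<Rightarrow> ('b \<Rightarrow> 'b \<Rightarrow> bool) \<Rightarrow> 'a \<times> 'b \<Rightarrow> 'a \<times> 'b \<Rightarrow> bool" where
  "np_adj u A B p q \<longleftrightarrow>
     (fst p = fst q \<or> A (fst p) (fst q)) \<and> (snd p = snd q \<or> B (snd p) (snd q)) \<and>
     (if fst p \<noteq> fst q then 1 else 0) + (if snd p \<noteq> snd q then 1 else 0) \<le> u"

definition np_homotopic :: "nat \<Rightarrow> 'a set \<Rightarrow> ('a \<Rightarrow> 'a \<Rightarrow> bool) \<Rightarrow> 'b set \<Rightarrow> ('b \<Rightarrow> 'b \<Rightarrow> bool)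
    \<Rightarrow> ('a \<Rightarrow> 'b) \<Rightarrow> ('a \<Rightarrow> 'b) \<Rightarrow> bool" where
  "np_homotopic u X A Y B f g \<longleftrightarrow> dcont X A Y B f \<and> dcont X A Y B g \<and>
     (\<exists>m::nat. \<exists>H :: 'a \<times> int \<Rightarrow> 'b.
        dcont (X \<times> {0..int m}) (np_adj u A int_adj) Y B H
        \<and> (\<forall>x\<in>X. H (x, 0) = f x) \<and> (\<forall>x\<in>X. H (x, int m) = g x))"

definition np_htpy_equiv :: "nat \<Rightarrow> 'a set \<Rightarrow> ('a \<Rightarrow> 'a \<Rightarrow> bool) \<Rightarrow> 'b set \<Rightarrow> ('b \<Rightarrow> 'b \<Rightarrow> bool) \<Rightarrow> bool" where
  "np_htpy_equiv u X A Y B \<longleftrightarrow> (\<exists>f g. dcont X A Y B f \<and> dcont Y B X A g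
     \<and> np_homotopic u X A X A (g \<circ> f) id \<and> np_homotopic u Y B Y B (f \<circ> g) id)"

definition np_irreducible :: "nat \<Rightarrow> int list set \<Rightarrow> (int list \<Rightarrow> int list \<Rightarrow> bool) \<Rightarrow> bool" where
  "np_irreducible u X A \<longleftrightarrow>
     \<not> (\<exists>Y B. digital_image Y B \<and> card Y < card X \<and> np_htpy_equiv u X A Y B)"

definition automorphism :: "'a set \<Rightarrow> ('a \<Rightarrow> 'a \<Rightarrow> bool) \<Rightarrow> ('a \<Rightarrow> 'a) \<Rightarrow> bool" where
  "automorphism X A f \<longleftrightarrow> bij_betw f X X \<and> dcont X A X A f \<and> dcont X A X A (inv_into X f)"

end

theory Submission
  imports Defs "HOL-Library.FuncSet"
begin

text \<open>
  If \<open>X\<close> is homotopy equivalent to a smaller image \<open>Y\<close> via \<open>f : X \<rightarrow> Y\<close> and \<open>g : Y \<rightarrow> X\<close>,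
  then the automorphism \<open>id\<close> is homotopic to \<open>g \<circ> f\<close>, whose image has at most \<open>card Y < card X\<close>
  points. Conversely, if an automorphism \<open>f\<close> is homotopic to a non-surjective \<open>g\<close>, then \<open>id\<close> is
  homotopic to the non-surjective map \<open>h = inv f \<circ> g\<close>. Some power \<open>r = h ^^ k\<close> with \<open>k \<ge> 1\<close> is
  idempotent on the finite set \<open>X\<close> and still homotopic to \<open>id\<close>, so \<open>r\<close> retracts \<open>X\<close> onto
  \<open>r ` X \<subseteq> h ` X\<close> and is a homotopy inverse of the inclusion; thus \<open>X\<close> is homotopy equivalent
  to an image with fewer points. Neither direction uses \<open>i \<in> {1, 2}\<close>: the argument works for
  every \<open>NP_u\<close>.
\<close>

lemma dcont_id: "dcont X A X A id"
  unfolding dcont_def by auto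

lemma dcont_comp: "dcont X A Y B f \<Longrightarrow> dcont Y B Z C g \<Longrightarrow> dcont X A Z C (g \<circ> f)"
  unfolding dcont_def image_subset_iff comp_def by blast

lemma dcont_funpow: "dcont X A X A h \<Longrightarrow> dcont X A X A (h ^^ j)"
  by (induction j) (auto simp: dcont_id intro: dcont_comp)

lemma automorphism_id: "automorphism X A id"
proof -
  have "inv_into X id x = x" if "x \<in> X" for x
    using inv_into_f_f[OF inj_on_id that] by simp
  then show ?thesis unfolding automorphism_def dcont_def by auto
qed

lemma digital_image_subset: "digital_image X A \<Longrightarrow> Y \<subseteq> X \<Longrightarrow> digital_image Y A"
  unfolding digital_image_def by (meson finite_subset subset_iff)

text \<open>Adjacency in \<open>X \<times> {0..m}\<close> depends on the two times only through whether they are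
  equal or neighbours, so it survives any reparametrisation of time preserving this.\<close>

lemma np_adj_int_adj: "np_adj u A int_adj (x, t) (y, s) \<Longrightarrow> \<bar>t - s\<bar> \<le> 1"
  unfolding np_adj_def int_adj_def by (auto split: if_splits)

lemma np_adj_retime:
  assumes "np_adj u A int_adj (x, t) (y, s)" "t' = s' \<longleftrightarrow> t = s" "\<bar>t' - s'\<bar> \<le> 1"
  shows "np_adj u A int_adj (x, t') (y, s')"
  using assms unfolding np_adj_def int_adj_def by auto

lemma np_homotopicE:
  assumes "np_homotopic u X A Y B f g"
  obtains m H where "dcont X A Y B f" "dcont X A Y B g"
    "dcont (X \<times> {0..int m}) (np_adj u A int_adj) Y B H"
    "\<forall>x\<in>X. H (x, 0) = f x" "\<forall>x\<in>X. H (x, int m) = g x"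
  using assms unfolding np_homotopic_def by blast

lemma np_homotopic_refl:
  assumes "dcont X A Y B f" "\<forall>x\<in>X. A x x"
  shows "np_homotopic u X A Y B f f"
  unfolding np_homotopic_def
proof (intro conjI assms exI[of _ 0])
  show "\<exists>H. dcont (X \<times> {0..int 0}) (np_adj u A int_adj) Y B H \<and>
        (\<forall>x\<in>X. H (x, 0) = f x) \<and> (\<forall>x\<in>X. H (x, int 0) = f x)"
    by (rule exI[of _ "\<lambda>p. f (fst p)"]) (use assms in \<open>auto simp: dcont_def np_adj_def\<close>)
qed

lemma np_homotopic_cong:
  assumes "np_homotopic u X A Y B f g" "\<forall>x\<in>X. f x = f' x" "\<forall>x\<in>X. g x = g' x"
  shows "np_homotopic u X A Y B f' g'"
proof -
  obtain m H where f: "dcont X A Y B f" "dcont X A Y B g"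
    and H: "dcont (X \<times> {0..int m}) (np_adj u A int_adj) Y B H"
      "\<forall>x\<in>X. H (x, 0) = f x" "\<forall>x\<in>X. H (x, int m) = g x"
    using assms(1) by (rule np_homotopicE)
  have "dcont X A Y B f'" "dcont X A Y B g'"
    using f assms(2,3) unfolding dcont_def by auto
  then show ?thesis
    unfolding np_homotopic_def using H assms(2,3) by (intro conjI exI[of _ m] exI[of _ H]) auto
qed

lemma np_homotopic_sym:
  assumes "np_homotopic u X A Y B f g"
  shows "np_homotopic u X A Y B g f"
proof -
  obtain m H where fg: "dcont X A Y B f" "dcont X A Y B g"
    and H: "dcont (X \<times> {0..int m}) (np_adj u A int_adj) Y B H"
      "\<forall>x\<in>X. H (x, 0) = f x" "\<forall>x\<in>X. H (x, int m) = g x"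
    using assms by (rule np_homotopicE)
  define H' where "H' = (\<lambda>(x, t). H (x, int m - t))"
  have "dcont (X \<times> {0..int m}) (np_adj u A int_adj) Y B H'"
    unfolding dcont_def
  proof (intro conjI ballI impI)
    show "H' ` (X \<times> {0..int m}) \<subseteq> Y"
      using H(1) unfolding dcont_def H'_def by force
  next
    fix p q assume p: "p \<in> X \<times> {0..int m}" and q: "q \<in> X \<times> {0..int m}"
      and adj: "np_adj u A int_adj p q"
    obtain x t y s where pq: "p = (x, t)" "q = (y, s)" by (cases p, cases q)
    have "np_adj u A int_adj (x, int m - t) (y, int m - s)"
      by (rule np_adj_retime[of _ _ _ t _ s]) (use adj pq np_adj_int_adj[of u A x t y s] in auto)
    then show "B (H' p) (H' q)"
      using H(1) p q pq unfolding dcont_def H'_def by auto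
  qed
  then show ?thesis
    unfolding np_homotopic_def using fg H by (intro conjI fg exI[of _ m] exI[of _ H']) (auto simp: H'_def)
qed

lemma np_homotopic_trans:
  assumes "np_homotopic u X A Y B f g" "np_homotopic u X A Y B g h"
  shows "np_homotopic u X A Y B f h"
proof -
  obtain m1 H1 where f: "dcont X A Y B f"
    and H1: "dcont (X \<times> {0..int m1}) (np_adj u A int_adj) Y B H1"
      "\<forall>x\<in>X. H1 (x, 0) = f x" "\<forall>x\<in>X. H1 (x, int m1) = g x"
    using assms(1) by (rule np_homotopicE)
  obtain m2 H2 where h: "dcont X A Y B h"
    and H2: "dcont (X \<times> {0..int m2}) (np_adj u A int_adj) Y B H2"
      "\<forall>x\<in>X. H2 (x, 0) = g x" "\<forall>x\<in>X. H2 (x, int m2) = h x"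
    using assms(2) by (rule np_homotopicE)
  define H where "H = (\<lambda>(x, t). if t \<le> int m1 then H1 (x, t) else H2 (x, t - int m1))"
  have H_late: "H (x, t) = H2 (x, t - int m1)" if "x \<in> X" "t \<ge> int m1" for x t
    using that H1(3) H2(2) by (auto simp: H_def)
  have "dcont (X \<times> {0..int (m1 + m2)}) (np_adj u A int_adj) Y B H"
    unfolding dcont_def
  proof (intro conjI ballI impI)
    show "H ` (X \<times> {0..int (m1 + m2)}) \<subseteq> Y"
      using H1(1) H2(1) unfolding dcont_def H_def by (force split: if_splits)
  next
    fix p q assume p: "p \<in> X \<times> {0..int (m1 + m2)}" and q: "q \<in> X \<times> {0..int (m1 + m2)}"
      and adj: "np_adj u A int_adj p q"
    obtain x t y s where pq: "p = (x, t)" "q = (y, s)" by (cases p, cases q)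
    have "\<bar>t - s\<bar> \<le> 1" using np_adj_int_adj adj pq by metis
    then consider "t \<le> int m1" "s \<le> int m1" | "t \<ge> int m1" "s \<ge> int m1" by linarith
    then show "B (H p) (H q)"
    proof cases
      case 1
      then show ?thesis using H1(1) p q pq adj unfolding dcont_def H_def by auto
    next
      case 2
      have "np_adj u A int_adj (x, t - int m1) (y, s - int m1)"
        by (rule np_adj_retime[of _ _ _ t _ s]) (use adj pq np_adj_int_adj in auto)
      then show ?thesis using 2 H2(1) p q pq H_late unfolding dcont_def by auto
    qed
  qed
  then show ?thesis
    unfolding np_homotopic_def using f h H1 H2
    by (intro conjI f h exI[of _ "m1 + m2"] exI[of _ H]) (auto simp: H_def)
qed

lemma np_homotopic_comp_right:
  assumes "np_homotopic u X A Y B f g" "dcont W C X A b"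
  shows "np_homotopic u W C Y B (f \<circ> b) (g \<circ> b)"
proof -
  obtain m H where fg: "dcont X A Y B f" "dcont X A Y B g"
    and H: "dcont (X \<times> {0..int m}) (np_adj u A int_adj) Y B H"
      "\<forall>x\<in>X. H (x, 0) = f x" "\<forall>x\<in>X. H (x, int m) = g x"
    using assms(1) by (rule np_homotopicE)
  define H' where "H' = (\<lambda>(w, t). H (b w, t))"
  have "dcont (W \<times> {0..int m}) (np_adj u C int_adj) Y B H'"
    unfolding dcont_def
  proof (intro conjI ballI impI)
    show "H' ` (W \<times> {0..int m}) \<subseteq> Y"
      using H(1) assms(2) unfolding dcont_def H'_def by force
  next
    fix p q assume p: "p \<in> W \<times> {0..int m}" and q: "q \<in> W \<times> {0..int m}"
      and adj: "np_adj u C int_adj p q"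
    obtain x t y s where pq: "p = (x, t)" "q = (y, s)" by (cases p, cases q)
    have "np_adj u A int_adj (b x, t) (b y, s)"
      using adj pq p q assms(2) unfolding np_adj_def dcont_def by (auto split: if_splits)
    then show "B (H' p) (H' q)"
      using H(1) assms(2) p q pq unfolding dcont_def H'_def image_subset_iff by auto
  qed
  then show ?thesis
    unfolding np_homotopic_def using H assms(2)
    by (intro conjI dcont_comp[OF assms(2)] fg exI[of _ m] exI[of _ H'])
      (auto simp: H'_def dcont_def)
qed

lemma np_homotopic_comp_left:
  assumes "np_homotopic u X A Y B f g" "dcont Y B Z D c"
  shows "np_homotopic u X A Z D (c \<circ> f) (c \<circ> g)"
proof -
  obtain m H where fg: "dcont X A Y B f" "dcont X A Y B g"
    and H: "dcont (X \<times> {0..int m}) (np_adj u A int_adj) Y B H"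
      "\<forall>x\<in>X. H (x, 0) = f x" "\<forall>x\<in>X. H (x, int m) = g x"
    using assms(1) by (rule np_homotopicE)
  show ?thesis
    unfolding np_homotopic_def using fg H dcont_comp[OF H(1) assms(2)]
    by (intro conjI dcont_comp[OF _ assms(2)] exI[of _ m] exI[of _ "c \<circ> H"]) auto
qed

lemma np_homotopic_id_funpow:
  assumes "np_homotopic u X A X A id h" "\<forall>x\<in>X. A x x"
  shows "np_homotopic u X A X A id (h ^^ j)"
proof (induction j)
  case 0
  show ?case unfolding funpow.simps(1) by (intro np_homotopic_refl dcont_id assms(2))
next
  case (Suc j)
  have "dcont X A X A h" using assms(1) by (rule np_homotopicE)
  then have "np_homotopic u X A X A (id \<circ> h ^^ j) (h \<circ> h ^^ j)"
    by (rule np_homotopic_comp_right[OF assms(1) dcont_funpow])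
  then have "np_homotopic u X A X A (h ^^ j) (h ^^ Suc j)"
    by simp
  with Suc show ?case by (rule np_homotopic_trans)
qed

lemma funpow_eventually_periodic_on:
  assumes "finite X" "h ` X \<subseteq> X"
  shows "\<exists>a p. p \<ge> 1 \<and> (\<forall>j\<ge>a. \<forall>x\<in>X. (h ^^ (j + p)) x = (h ^^ j) x)"
proof -
  have maps: "(h ^^ j) x \<in> X" if "x \<in> X" for j x
    using that assms(2) by (induction j) auto
  define F where "F = (\<lambda>j. restrict (h ^^ j) X)"
  have "range F \<subseteq> X \<rightarrow>\<^sub>E X" unfolding F_def by (auto intro: maps)
  moreover have "finite (X \<rightarrow>\<^sub>E X)" using assms(1) by (intro finite_PiE) auto
  ultimately have "finite (range F)" by (rule finite_subset)
  then have "\<not> inj F" using finite_imageD[of F UNIV] by auto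
  then obtain a b where ab: "a < b" "F a = F b"
    unfolding inj_def by (metis linorder_neqE_nat)
  have periodic: "(h ^^ (j + (b - a))) x = (h ^^ j) x" if "a \<le> j" "x \<in> X" for j x
  proof -
    have "j + (b - a) = (j - a) + b" using that(1) ab(1) by simp
    then have "(h ^^ (j + (b - a))) x = (h ^^ (j - a)) ((h ^^ b) x)"
      by (simp only: funpow_add comp_apply)
    also have "\<dots> = (h ^^ (j - a)) ((h ^^ a) x)"
      using fun_cong[OF ab(2), of x] that(2) by (simp add: F_def)
    also have "\<dots> = (h ^^ ((j - a) + a)) x"
      by (simp only: funpow_add comp_apply)
    also have "\<dots> = (h ^^ j) x"
      using that(1) by simp
    finally show ?thesis .
  qed
  show ?thesis using periodic ab(1) by (intro exI[of _ a] exI[of _ "b - a"]) auto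
qed

lemma funpow_idempotent_on_finite:
  assumes "finite X" "h ` X \<subseteq> X"
  obtains k where "k \<ge> 1" "\<forall>x\<in>X. (h ^^ k) ((h ^^ k) x) = (h ^^ k) x"
proof -
  obtain a p where p: "p \<ge> 1" and per: "\<forall>j\<ge>a. \<forall>x\<in>X. (h ^^ (j + p)) x = (h ^^ j) x"
    using funpow_eventually_periodic_on[OF assms] by blast
  have per_mult: "(h ^^ (j + q * p)) x = (h ^^ j) x" if "a \<le> j" "x \<in> X" for j q x
  proof (induction q)
    case 0
    show ?case by simp
  next
    case (Suc q)
    have "(h ^^ (j + Suc q * p)) x = (h ^^ ((j + q * p) + p)) x"
      by (simp add: algebra_simps)
    also have "\<dots> = (h ^^ (j + q * p)) x"
      using per that by auto
    finally show ?case using Suc by simp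
  qed
  \<comment> \<open>any multiple of the period that is at least the preperiod \<open>a\<close> is an idempotent exponent\<close>
  define k where "k = (a + 1) * p"
  have "(a + 1) * 1 \<le> k" unfolding k_def by (rule mult_le_mono2[OF p])
  then have k: "a < k" "k \<ge> 1" by simp_all
  have "(h ^^ k) ((h ^^ k) x) = (h ^^ k) x" if "x \<in> X" for x
  proof -
    have "(h ^^ k) ((h ^^ k) x) = (h ^^ (k + (a + 1) * p)) x"
      unfolding k_def by (simp only: funpow_add comp_apply)
    also have "\<dots> = (h ^^ k) x"
      using per_mult[of k x "a + 1"] k(1) that by simp
    finally show ?thesis .
  qed
  with k(2) show ?thesis using that by blast
qed

lemma np_htpy_equiv_retract:
  assumes refl: "\<forall>x\<in>X. A x x" and r: "np_homotopic u X A X A id r"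
    and idem: "\<forall>x\<in>X. r (r x) = r x"
  shows "np_htpy_equiv u X A (r ` X) A"
proof -
  have rc: "dcont X A X A r" using r by (rule np_homotopicE)
  then have rX: "r ` X \<subseteq> X" unfolding dcont_def by blast
  have retr: "dcont X A (r ` X) A r" using rc unfolding dcont_def by auto
  have incl: "dcont (r ` X) A X A id" using rX unfolding dcont_def by auto
  have "np_homotopic u X A X A (id \<circ> r) id"
    using np_homotopic_sym[OF r] by simp
  moreover have "np_homotopic u (r ` X) A (r ` X) A (r \<circ> id) id"
  proof (rule np_homotopic_cong)
    show "np_homotopic u (r ` X) A (r ` X) A (r \<circ> id) (r \<circ> id)"
      using retr rX refl by (intro np_homotopic_refl) (auto simp: dcont_def)
  qed (use idem in auto)
  ultimately show ?thesis
    unfolding np_htpy_equiv_def using retr incl by blast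
qed

lemma reducible_if_automorphism_homotopic_nonsurj:
  assumes X: "digital_image X A" and f: "automorphism X A f"
    and g: "g ` X \<subseteq> X" "g ` X \<noteq> X" and fg: "np_homotopic u X A X A f g"
  shows "\<exists>Y. digital_image Y A \<and> card Y < card X \<and> np_htpy_equiv u X A Y A"
proof -
  have finX: "finite X" and refl: "\<forall>x\<in>X. A x x"
    using X unfolding digital_image_def by auto
  define h where "h = inv_into X f \<circ> g"
  have "np_homotopic u X A X A (inv_into X f \<circ> f) h"
    using np_homotopic_comp_left[OF fg] f unfolding automorphism_def h_def by blast
  moreover have "\<forall>x\<in>X. (inv_into X f \<circ> f) x = id x"
    using f unfolding automorphism_def by (simp add: bij_betw_def)
  ultimately have id_h: "np_homotopic u X A X A id h"
    by (rule np_homotopic_cong) simp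
  have hc: "dcont X A X A h" using id_h by (rule np_homotopicE)
  have "card (h ` X) \<le> card (g ` X)"
    unfolding h_def image_comp[symmetric] using finX by (intro card_image_le) simp
  also have "card (g ` X) < card X"
    using g finX by (simp add: psubset_card_mono psubset_eq)
  finally have card_h: "card (h ` X) < card X" .
  have "h ` X \<subseteq> X" using hc unfolding dcont_def by blast
  then obtain k where k: "k \<ge> 1" and idem: "\<forall>x\<in>X. (h ^^ k) ((h ^^ k) x) = (h ^^ k) x"
    using funpow_idempotent_on_finite[OF finX] by blast
  obtain k' where k': "k = Suc k'" using k by (cases k) auto
  have "(h ^^ k) ` X \<subseteq> h ` X"
    using dcont_funpow[OF hc, of k'] unfolding k' dcont_def by (auto simp: funpow_Suc_right)
  then have "card ((h ^^ k) ` X) < card X"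
    using card_h finX by (meson card_mono finite_imageI le_less_trans)
  moreover have "digital_image ((h ^^ k) ` X) A"
    using dcont_funpow[OF hc] X by (auto simp: dcont_def intro: digital_image_subset)
  moreover have "np_htpy_equiv u X A ((h ^^ k) ` X) A"
    using refl np_homotopic_id_funpow[OF id_h refl] idem by (rule np_htpy_equiv_retract)
  ultimately show ?thesis by blast
qed

lemma id_homotopic_nonsurj_if_reducible:
  assumes Y: "digital_image Y B" "card Y < card X" and XY: "np_htpy_equiv u X A Y B"
  shows "\<exists>g. g ` X \<subseteq> X \<and> g ` X \<noteq> X \<and> np_homotopic u X A X A id g"
proof -
  obtain f g where f: "dcont X A Y B f" and g: "dcont Y B X A g"
    and gf: "np_homotopic u X A X A (g \<circ> f) id"
    using XY unfolding np_htpy_equiv_def by blast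
  have finY: "finite Y" using Y(1) unfolding digital_image_def by auto
  have "(g \<circ> f) ` X \<subseteq> g ` Y" using f unfolding dcont_def by auto
  then have "card ((g \<circ> f) ` X) \<le> card Y"
    using card_mono[OF finite_imageI[OF finY]] card_image_le[OF finY, of g] by fastforce
  then have "(g \<circ> f) ` X \<noteq> X" using Y(2) by auto
  moreover have "(g \<circ> f) ` X \<subseteq> X" using dcont_comp[OF f g] unfolding dcont_def by blast
  ultimately show ?thesis using np_homotopic_sym[OF gf] by blast
qed

theorem mainTheorem7:
  fixes X :: "int list set" and A :: "int list \<Rightarrow> int list \<Rightarrow> bool" and i :: nat
  assumes "i \<in> {1, 2}" and "digital_image X A"
  shows "np_irreducible i X A \<longleftrightarrow>
    \<not> (\<exists>f g. automorphism X A f \<and> g ` X \<subseteq> X \<and> g ` X \<noteq> X \<and> np_homotopic i X A X A f g)"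
proof
  assume irreducible: "np_irreducible i X A"
  show "\<not> (\<exists>f g. automorphism X A f \<and> g ` X \<subseteq> X \<and> g ` X \<noteq> X \<and> np_homotopic i X A X A f g)"
  proof (intro notI, elim exE conjE)
    fix f g
    assume "automorphism X A f" "g ` X \<subseteq> X" "g ` X \<noteq> X" "np_homotopic i X A X A f g"
    from reducible_if_automorphism_homotopic_nonsurj[OF assms(2) this]
    show False using irreducible unfolding np_irreducible_def by blast
  qed
next
  assume no_homotopy: "\<not> (\<exists>f g. automorphism X A f \<and> g ` X \<subseteq> X \<and> g ` X \<noteq> X \<and> np_homotopic i X A X A f g)"
  show "np_irreducible i X A"
    unfolding np_irreducible_def
  proof (intro notI, elim exE conjE)
    fix Y B
    assume "digital_image Y B" "card Y < card X" "np_htpy_equiv i X A Y B"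
    from id_homotopic_nonsurj_if_reducible[OF this]
    show False using no_homotopy automorphism_id[of X A] by blast
  qed
qed

end
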